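(* Let $q_1,\dots,q_n,q,p\in F(V)$. Then: (1) if $q_1,\dots,q_n\vdash_{\L^*}q$, then $q_1,\dots,q_n\vdash_{\mathrm{sq}\L^*}(p\to p)\to q$; (2) if $q$ is regular, then $(p\to p)\to q\vdash_{\mathrm{sq}\L^*}q$.
   Context: Let $V$ be a set of propositional variables and $F(V)$ the set of formulas built from $V$ and the constant $1$ using $\to$ and $\neg$. Abbreviations: $p^+:=(p\to 1)\to 1$, $p^-:=(p\to\neg 1)\to\neg 1$ (binding more tightly than $\neg$), $p\vee q:=((p^+\to q^+)^+\to(\neg p)^-)\to((q^-\to p^-)^-\to p^-)$; an axiom "$p\leftrightarrow q$" stands for the two axioms $p\to q$ and $q\to p$. A formula is regular if it contains an occurrence of $\to$ or of $1$. The logic $\L^*$ has axiom schemas: (P1) $(p\to q)\leftrightarrow(\neg q\to\neg p)$; (P2) $p\leftrightarrow((q\to q)\to p)$; (P3) $\neg(p\to q)\leftrightarrow(q\to p)$; (P4) $p\to 1$; (P5) $1\leftrightarrow((1\to p)\to 1)$; (P6) $((p\to 1)\to((q\to 1)\to r))\to((q\to 1)\to((p\to 1)\to r))$; (P7) $(p\to q)\leftrightarrow((q^+\to p^-)\to(p^+\to q^-))$; (P8) $(p\to(\neg p\to q))^+\leftrightarrow(p^+\to(\neg p^+\to q^+))$; (P9) $(p\to(q\vee r))\leftrightarrow((p\to r)\vee(p\to q))$; (P10) $(p\vee(q\vee r))\leftrightarrow((p\vee q)\vee r)$; and rules (R1) from $p$ and $p\to q$ infer $q$; (R2) from $p\to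 q$ and $r\to t$ infer $(q\to r)\to(p\to t)$; (R3) from $p$ infer $p^-$. The logic $\mathrm{sq}\L^*$ has axiom schemas (Q1) $(p\to q)\leftrightarrow(\neg q\to\neg p)$; (Q2) $1\leftrightarrow((1\to p)\to 1)$; (Q3) $p\leftrightarrow((q\to q)\to p)$; (Q4) $(p\to q)\leftrightarrow((q^+\to p^-)\to(p^+\to q^-))$; (Q5) $\neg(p\to q)\leftrightarrow(q\to p)$; (Q6) $(p\to(\neg p\to q))^+\leftrightarrow(p^+\to(\neg p^+\to q^+))$; (Q7) $(p\to(q\vee r))\leftrightarrow((p\to r)\vee(p\to q))$; (Q8) $(p\vee(q\vee r))\leftrightarrow((p\vee q)\vee r)$; (Q9) $((p\to 1)\to((q\to 1)\to r))\to((q\to 1)\to((p\to 1)\to r))$; (Q10) $p\to 1$; and rules: (qMP) from $(r\to r)\to p$ and $(r\to r)\to(p\to q)$ infer $(r\to r)\to q$; (Reg) from $p$ infer $(r\to r)\to p$; (AReg1) from $(r\to r)\to(p\to q)$ infer $p\to q$; (AReg2) from $(r\to r)\to\neg(p\to q)$ infer $\neg(p\to q)$; (AReg3) from $(r\to r)\to\neg 1$ infer $\neg 1$; (AReg4) from $(r\to r)\to 1$ infer $1$; (Inv1) from $p$ infer $\neg\neg p$; (Inv2) from $\neg\neg p$ infer $p$; (Flat) from $p$ and $\neg 1$ infer $\neg p$; (R2$'$) from $p\to q$ and $r\to t$ infer $(q\to r)\to(p\to t)$; (R3$'$) from $(r\to r)\to p$ infer $p^-$. For a logic $L\in\{\L^*,\mathrm{sq}\L^*\}$,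 $q_1,\dots,q_n\vdash_L q$ means there is a finite sequence of formulas ending with $q$ in which each member is an axiom instance of $L$, one of the $q_i$, or follows from earlier members by a rule of $L$. *)

theory Defs
  imports Main
begin

datatype 'v fm = Var 'v | One | Imp "'v fm" "'v fm" | Neg "'v fm"

definition Pplus :: "'v fm \<Rightarrow> 'v fm" where
  "Pplus p = Imp (Imp p One) One"

definition Pminus :: "'v fm \<Rightarrow> 'v fm" where
  "Pminus p = Imp (Imp p (Neg One)) (Neg One)"

definition Disj :: "'v fm \<Rightarrow> 'v fm \<Rightarrow> 'v fm" where
  "Disj p q = Imp (Imp (Pplus (Imp (Pplus p) (Pplus q))) (Pminus (Neg p)))
                  (Imp (Pminus (Imp (Pminus q) (Pminus p))) (Pminus p))"

fun regular :: "'v fm \<Rightarrow> bool" where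
  "regular (Var v) = False"
| "regular One = True"
| "regular (Imp p q) = True"
| "regular (Neg p) = regular p"

(* "p \<leftrightarrow> q" stands for the two axioms p \<rightarrow> q and q \<rightarrow> p *)
definition Iff :: "'v fm \<Rightarrow> 'v fm \<Rightarrow> 'v fm set" where
  "Iff p q = {Imp p q, Imp q p}"

inductive axL :: "'v fm \<Rightarrow> bool" where
  P1: "a \<in> Iff (Imp p q) (Imp (Neg q) (Neg p)) \<Longrightarrow> axL a"
| P2: "a \<in> Iff p (Imp (Imp q q) p) \<Longrightarrow> axL a"
| P3: "a \<in> Iff (Neg (Imp p q)) (Imp q p) \<Longrightarrow> axL a"
| P4: "axL (Imp p One)"
| P5: "a \<in> Iff One (Imp (Imp One p) One) \<Longrightarrow> axL a"
| P6: "axL (Imp (Imp (Imp p One) (Imp (Imp q One) r)) (Imp (Imp q One) (Imp (Imp p One) r)))"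
| P7: "a \<in> Iff (Imp p q) (Imp (Imp (Pplus q) (Pminus p)) (Imp (Pplus p) (Pminus q))) \<Longrightarrow> axL a"
| P8: "a \<in> Iff (Pplus (Imp p (Imp (Neg p) q))) (Imp (Pplus p) (Imp (Neg (Pplus p)) (Pplus q))) \<Longrightarrow> axL a"
| P9: "a \<in> Iff (Imp p (Disj q r)) (Disj (Imp p r) (Imp p q)) \<Longrightarrow> axL a"
| P10: "a \<in> Iff (Disj p (Disj q r)) (Disj (Disj p q) r) \<Longrightarrow> axL a"

inductive derL :: "'v fm set \<Rightarrow> 'v fm \<Rightarrow> bool" where
  ax: "axL a \<Longrightarrow> derL H a"
| hyp: "a \<in> H \<Longrightarrow> derL H a"
| R1: "derL H p \<Longrightarrow> derL H (Imp p q) \<Longrightarrow> derL H q"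
| R2: "derL H (Imp p q) \<Longrightarrow> derL H (Imp r t) \<Longrightarrow> derL H (Imp (Imp q r) (Imp p t))"
| R3: "derL H p \<Longrightarrow> derL H (Pminus p)"

inductive axSQ :: "'v fm \<Rightarrow> bool" where
  Q1: "a \<in> Iff (Imp p q) (Imp (Neg q) (Neg p)) \<Longrightarrow> axSQ a"
| Q2: "a \<in> Iff One (Imp (Imp One p) One) \<Longrightarrow> axSQ a"
| Q3: "a \<in> Iff p (Imp (Imp q q) p) \<Longrightarrow> axSQ a"
| Q4: "a \<in> Iff (Imp p q) (Imp (Imp (Pplus q) (Pminus p)) (Imp (Pplus p) (Pminus q))) \<Longrightarrow> axSQ a"
| Q5: "a \<in> Iff (Neg (Imp p q)) (Imp q p) \<Longrightarrow> axSQ a"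
| Q6: "a \<in> Iff (Pplus (Imp p (Imp (Neg p) q))) (Imp (Pplus p) (Imp (Neg (Pplus p)) (Pplus q))) \<Longrightarrow> axSQ a"
| Q7: "a \<in> Iff (Imp p (Disj q r)) (Disj (Imp p r) (Imp p q)) \<Longrightarrow> axSQ a"
| Q8: "a \<in> Iff (Disj p (Disj q r)) (Disj (Disj p q) r) \<Longrightarrow> axSQ a"
| Q9: "axSQ (Imp (Imp (Imp p One) (Imp (Imp q One) r)) (Imp (Imp q One) (Imp (Imp p One) r)))"
| Q10: "axSQ (Imp p One)"

inductive derSQ :: "'v fm set \<Rightarrow> 'v fm \<Rightarrow> bool" where
  ax: "axSQ a \<Longrightarrow> derSQ H a"
| hyp: "a \<in> H \<Longrightarrow> derSQ H a"
| qMP: "derSQ H (Imp (Imp r r) p) \<Longrightarrow> derSQ H (Imp (Imp r r) (Imp p q)) \<Longrightarrow> derSQ H (Imp (Imp r r) q)"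
| Reg: "derSQ H p \<Longrightarrow> derSQ H (Imp (Imp r r) p)"
| AReg1: "derSQ H (Imp (Imp r r) (Imp p q)) \<Longrightarrow> derSQ H (Imp p q)"
| AReg2: "derSQ H (Imp (Imp r r) (Neg (Imp p q))) \<Longrightarrow> derSQ H (Neg (Imp p q))"
| AReg3: "derSQ H (Imp (Imp r r) (Neg One)) \<Longrightarrow> derSQ H (Neg One)"
| AReg4: "derSQ H (Imp (Imp r r) One) \<Longrightarrow> derSQ H One"
| Inv1: "derSQ H p \<Longrightarrow> derSQ H (Neg (Neg p))"
| Inv2: "derSQ H (Neg (Neg p)) \<Longrightarrow> derSQ H p"
| Flat: "derSQ H p \<Longrightarrow> derSQ H (Neg One) \<Longrightarrow> derSQ H (Neg p)"
| R2': "derSQ H (Imp p q) \<Longrightarrow> derSQ H (Imp r t) \<Longrightarrow> derSQ H (Imp (Imp q r) (Imp p t))"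
| R3': "derSQ H (Imp (Imp r r) p) \<Longrightarrow> derSQ H (Pminus p)"

end

theory Submission
  imports Defs
begin

text \<open>
  Every axiom of \<open>\<L>\<^sup>*\<close> is an axiom of \<open>sq\<L>\<^sup>*\<close>, and each rule of \<open>\<L>\<^sup>*\<close> is
  simulated by its guarded counterpart (qMP for R1, R2' after unguarding
  implications by AReg1, R3' for R3), so guarding a whole derivation by
  \<open>(p \<rightarrow> p) \<rightarrow> _\<close> works.  For the converse, a regular formula is \<open>\<not>\<^sup>n x\<close> with
  \<open>x\<close> either \<open>1\<close> or an implication; the rules AReg1--AReg4 remove the guard when
  \<open>n \<le> 1\<close>, and for larger \<open>n\<close> the provable implication \<open>\<not>\<not>y \<rightarrow> y\<close> (for regular
  \<open>y\<close>) moves two negations out of the guard, which Inv1 restores afterwards.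
\<close>

lemma axL_imp_axSQ: "axL a \<Longrightarrow> axSQ a"
  by (induction rule: axL.induct) (auto intro: axSQ.intros)

lemma derSQ_guarded_if_derL: "derL H q \<Longrightarrow> derSQ H (Imp (Imp p p) q)"
proof (induction rule: derL.induct)
  case (ax a H)
  then show ?case by (auto intro: derSQ.intros axL_imp_axSQ)
next
  case (hyp a H)
  then show ?case by (auto intro: derSQ.intros)
next
  case (R1 H a b)
  from R1.IH show ?case by (rule derSQ.qMP)
next
  case (R2 H a b c d)
  then show ?case by (meson derSQ.AReg1 derSQ.R2' derSQ.Reg)
next
  case (R3 H a)
  from R3.IH have "derSQ H (Pminus a)" by (rule derSQ.R3')
  then show ?case by (rule derSQ.Reg)
qed

lemma derSQ_guarded_mp:
  "derSQ H (Imp (Imp r r) a) \<Longrightarrow> derSQ H (Imp a b) \<Longrightarrow> derSQ H (Imp (Imp r r) b)"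
  by (meson derSQ.qMP derSQ.Reg)

lemma derSQ_mp_imp: "derSQ H c \<Longrightarrow> derSQ H (Imp c (Imp a b)) \<Longrightarrow> derSQ H (Imp a b)"
  by (meson derSQ.AReg1 derSQ.Reg derSQ_guarded_mp)

lemma derSQ_imp_trans: "derSQ H (Imp a b) \<Longrightarrow> derSQ H (Imp b c) \<Longrightarrow> derSQ H (Imp a c)"
proof -
  assume "derSQ H (Imp a b)" and "derSQ H (Imp b c)"
  then have "derSQ H (Imp (Imp b b) (Imp a c))" by (rule derSQ.R2')
  moreover have "derSQ H (Imp (Imp (Imp b b) (Imp a c)) (Imp a c))"
    by (rule derSQ.ax, rule axSQ.Q3[of _ "Imp a c" b]) (simp add: Iff_def)
  ultimately show ?thesis by (rule derSQ_mp_imp)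
qed

lemma derSQ_contrapos: "derSQ H (Imp a b) \<Longrightarrow> derSQ H (Imp (Neg b) (Neg a))"
proof -
  assume "derSQ H (Imp a b)"
  moreover have "derSQ H (Imp (Imp a b) (Imp (Neg b) (Neg a)))"
    by (rule derSQ.ax, rule axSQ.Q1[of _ a b]) (simp add: Iff_def)
  ultimately show ?thesis by (rule derSQ_mp_imp)
qed

lemma derSQ_neg_imp_swap:
  "derSQ H (Imp (Neg (Imp a b)) (Imp b a))"
  "derSQ H (Imp (Imp b a) (Neg (Imp a b)))"
  by (rule derSQ.ax, rule axSQ.Q5[of _ a b], simp add: Iff_def)+

lemma derSQ_double_neg_imp:
  "derSQ H (Imp (Neg (Neg (Imp a b))) (Imp a b))"
  "derSQ H (Imp (Imp a b) (Neg (Neg (Imp a b))))"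
proof -
  have "derSQ H (Imp (Neg (Neg (Imp a b))) (Neg (Imp b a)))"
    by (rule derSQ_contrapos, rule derSQ_neg_imp_swap)
  then show "derSQ H (Imp (Neg (Neg (Imp a b))) (Imp a b))"
    using derSQ_neg_imp_swap(1) by (rule derSQ_imp_trans)
  have "derSQ H (Imp (Neg (Imp b a)) (Neg (Neg (Imp a b))))"
    by (rule derSQ_contrapos, rule derSQ_neg_imp_swap)
  with derSQ_neg_imp_swap(2) show "derSQ H (Imp (Imp a b) (Neg (Neg (Imp a b))))"
    by (rule derSQ_imp_trans)
qed

lemma derSQ_double_neg_One:
  "derSQ H (Imp (Neg (Neg One)) One)"
  "derSQ H (Imp One (Neg (Neg One)))"
proof -
  show "derSQ H (Imp (Neg (Neg One)) One)"
    by (rule derSQ.ax, rule axSQ.Q10)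
  let ?x = "Imp (Imp One One) One"
  \<comment> \<open>Q2 identifies \<open>1\<close> with an implication, whose double negation is known.\<close>
  have "derSQ H (Imp One ?x)" and x_One: "derSQ H (Imp ?x One)"
    by (rule derSQ.ax, rule axSQ.Q2[of _ One], simp add: Iff_def)+
  moreover have "derSQ H (Imp ?x (Neg (Neg ?x)))"
    by (rule derSQ_double_neg_imp)
  moreover have "derSQ H (Imp (Neg (Neg ?x)) (Neg (Neg One)))"
    using x_One by (intro derSQ_contrapos)
  ultimately show "derSQ H (Imp One (Neg (Neg One)))"
    using derSQ_imp_trans by blast
qed

lemma derSQ_double_neg:
  "regular y \<Longrightarrow> derSQ H (Imp (Neg (Neg y)) y) \<and> derSQ H (Imp y (Neg (Neg y)))"
proof (induction y)
  case (Neg z)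
  then show ?case by (simp add: derSQ_contrapos)
qed (simp_all add: derSQ_double_neg_imp derSQ_double_neg_One)

lemma derSQ_unguard:
  "regular y \<Longrightarrow>
     (derSQ H (Imp (Imp r r) y) \<longrightarrow> derSQ H y)
   \<and> (derSQ H (Imp (Imp r r) (Neg y)) \<longrightarrow> derSQ H (Neg y))"
proof (induction y)
  case One
  then show ?case by (auto intro: derSQ.AReg3 derSQ.AReg4)
next
  case (Imp a b)
  then show ?case by (auto intro: derSQ.AReg1 derSQ.AReg2)
next
  case (Neg z)
  then have IH: "derSQ H (Imp (Imp r r) z) \<Longrightarrow> derSQ H z"
    and unguard_Neg: "derSQ H (Imp (Imp r r) (Neg z)) \<Longrightarrow> derSQ H (Neg z)"
    and double_neg: "derSQ H (Imp (Neg (Neg z)) z)"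
    by (simp_all add: derSQ_double_neg)
  have "derSQ H (Neg (Neg z))" if "derSQ H (Imp (Imp r r) (Neg (Neg z)))"
    using IH[OF derSQ_guarded_mp[OF that double_neg]] by (rule derSQ.Inv1)
  with unguard_Neg show ?case by blast
qed simp

theorem lemma4p1:
  fixes qs :: "'v fm list" and q p :: "'v fm"
  shows "(derL (set qs) q \<longrightarrow> derSQ (set qs) (Imp (Imp p p) q))
       \<and> (regular q \<longrightarrow> derSQ {Imp (Imp p p) q} q)"
proof (intro conjI impI)
  show "derSQ (set qs) (Imp (Imp p p) q)" if "derL (set qs) q"
    using that by (rule derSQ_guarded_if_derL)
  show "derSQ {Imp (Imp p p) q} q" if "regular q"
    using derSQ_unguard[OF that] by (blast intro: derSQ.hyp)
qed

end
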